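(* Let $k$ be a field and $O=k\langle z_1,z_2\rangle/(z_2^2z_1,\ z_2z_1^3,\ z_2z_1z_2z_1^2)$, graded with $\deg z_1=\deg z_2=1$. Then the Hilbert series of $O$ is $H_O(t)=\frac{1}{(1-t)^2(1-t^2)(1-t^3)}$.
   Context: The Hilbert series of a graded vector space $M=\bigoplus M_i$ is $H_M(t)=\sum_i(\dim_kM_i)t^i$. *)

theory Defs
  imports Main "HOL-Computational_Algebra.Formal_Power_Series" "HOL-Library.Function_Algebras"
begin

text \<open>The free associative algebra k<z1,z2> is modelled as finitely supported
functions from words over the alphabet {z1,z2} to k. A word is a bool list,
with False standing for z1 and True for z2.\<close>

type_synonym word = "bool list"

definition freealg :: "(word \<Rightarrow> 'k::field) set" where
  "freealg = {f. finite {w. f w \<noteq> 0}}"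

definition fmul :: "(word \<Rightarrow> 'k::field) \<Rightarrow> (word \<Rightarrow> 'k) \<Rightarrow> word \<Rightarrow> 'k" where
  "fmul f g w = (\<Sum>i\<le>length w. f (take i w) * g (drop i w))"

definition monom_w :: "word \<Rightarrow> word \<Rightarrow> 'k::field" where
  "monom_w u = (\<lambda>v. if v = u then 1 else 0)"

definition fscale :: "'k::field \<Rightarrow> (word \<Rightarrow> 'k) \<Rightarrow> word \<Rightarrow> 'k" where
  "fscale c f = (\<lambda>w. c * f w)"

inductive_set ideal_gen :: "(word \<Rightarrow> 'k::field) set \<Rightarrow> (word \<Rightarrow> 'k) set" for R where
  zero: "(\<lambda>w. 0) \<in> ideal_gen R"
| add: "x \<in> ideal_gen R \<Longrightarrow> y \<in> ideal_gen R \<Longrightarrow> (\<lambda>w. x w + y w) \<in> ideal_gen R"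
| gen: "a \<in> freealg \<Longrightarrow> b \<in> freealg \<Longrightarrow> r \<in> R \<Longrightarrow> fmul (fmul a r) b \<in> ideal_gen R"

definition homog :: "nat \<Rightarrow> (word \<Rightarrow> 'k::field) set" where
  "homog n = {f \<in> freealg. \<forall>w. f w \<noteq> 0 \<longrightarrow> length w = n}"

text \<open>dim_k of the degree-n component of the quotient A/I, i.e. of the image
of A_n in A/I, which is A_n/(A_n \<inter> I).\<close>
definition quot_dim :: "'k::field itself \<Rightarrow> (word \<Rightarrow> 'k) set \<Rightarrow> nat \<Rightarrow> nat" where
  "quot_dim _ R n =
     vector_space.dim (fscale :: 'k \<Rightarrow> _) (homog n)
     - vector_space.dim (fscale :: 'k \<Rightarrow> _) (homog n \<inter> ideal_gen R)"

definition hilbert_series :: "'k::field itself \<Rightarrow> (word \<Rightarrow> 'k) set \<Rightarrow> rat fps" where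
  "hilbert_series K R = Abs_fps (\<lambda>n. of_nat (quot_dim K R n))"

definition O_rels :: "(word \<Rightarrow> 'k::field) set" where
  "O_rels = {monom_w [True, True, False], monom_w [True, False, False, False],
             monom_w [True, False, True, False, False]}"

end

theory Submission
  imports Defs "HOL-Library.Sublist"
begin

text \<open>The relations are monomials, so the ideal they generate is spanned by the words
containing one of them as a factor, and the degree-n part of O has the remaining
(normal) words of length n as a basis. A word avoids z2 z2 z1, z2 z1^3 and z2 z1 z2 z1^2
exactly when it has the form z1^a (z2 z1^2)^b (z2 z1)^c z2^d, and this factorisation is
unique. Peeling off the blocks one type at a time, each type contributes a factor
1/(1 - t^k) to the generating function, k being the length of the block.\<close>

lemma finite_words_of_length: "finite {w :: 'a::finite list. length w = n}"
  using finite_lists_length_eq[of "UNIV :: 'a set" n] by simp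

interpretation fscale: vector_space "fscale :: 'k::field \<Rightarrow> (word \<Rightarrow> 'k) \<Rightarrow> _"
  by unfold_locales (auto simp: fscale_def algebra_simps)

lemma sum_fun_apply: "(\<Sum>x\<in>A. g x) w = (\<Sum>x\<in>A. g x w)"
  for g :: "'a \<Rightarrow> 'b \<Rightarrow> 'c::comm_monoid_add"
  by (induction A rule: infinite_finite_induct) auto

definition supported_on :: "word set \<Rightarrow> (word \<Rightarrow> 'k::field) set" where
  "supported_on S = {f. \<forall>w. f w \<noteq> 0 \<longrightarrow> w \<in> S}"

lemma fscale_monom_w_apply: "fscale c (monom_w u) w = (if w = u then c else 0)"
  by (simp add: fscale_def monom_w_def)

lemma supported_on_sum_monom_w:
  assumes "finite S" "f \<in> supported_on S"
  shows "f = (\<Sum>w\<in>S. fscale (f w) (monom_w w))"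
proof
  fix x
  show "f x = (\<Sum>w\<in>S. fscale (f w) (monom_w w)) x"
    using assms by (auto simp: sum_fun_apply fscale_monom_w_apply supported_on_def)
qed

lemma dim_supported_on:
  assumes "finite S"
  shows "fscale.dim (supported_on S :: (word \<Rightarrow> 'k::field) set) = card S"
proof (rule fscale.dim_unique)
  let ?B = "(monom_w :: word \<Rightarrow> word \<Rightarrow> 'k) ` S"
  show "?B \<subseteq> supported_on S"
    by (auto simp: supported_on_def monom_w_def split: if_splits)
  show "supported_on S \<subseteq> fscale.span ?B"
  proof
    fix f :: "word \<Rightarrow> 'k" assume "f \<in> supported_on S"
    then have "f = (\<Sum>w\<in>S. fscale (f w) (monom_w w))"
      by (rule supported_on_sum_monom_w[OF assms])
    also have "\<dots> \<in> fscale.span ?B"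
      by (intro fscale.span_sum fscale.span_scale fscale.span_base) auto
    finally show "f \<in> fscale.span ?B" .
  qed
  show "card ?B = card S"
    by (rule card_image) (auto simp: inj_on_def monom_w_def fun_eq_iff)
  show "fscale.independent ?B"
    unfolding fscale.independent_explicit_module
  proof (intro allI impI)
    fix T c v
    assume T: "finite T" "T \<subseteq> ?B" and zero: "(\<Sum>v\<in>T. fscale (c v) v) = 0" and "v \<in> T"
    then obtain u where v: "v = monom_w u" by auto
    have "(\<Sum>v\<in>T. fscale (c v) v) u = (\<Sum>v\<in>T. if v = monom_w u then c v else 0)"
      using T by (intro trans[OF sum_fun_apply] sum.cong)
        (auto simp: fscale_def monom_w_def split: if_splits)
    also have "\<dots> = c v"
      using T \<open>v \<in> T\<close> v by simp
    finally have "(\<Sum>v\<in>T. fscale (c v) v) u = c v" .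
    then show "c v = 0" using zero by simp
  qed
qed

definition normal_words :: "'a list set \<Rightarrow> 'a list set" where
  "normal_words R = {w. \<forall>r\<in>R. \<not> sublist r w}"

lemma Nil_in_normal_words: "[] \<notin> R \<Longrightarrow> [] \<in> normal_words R"
  by (auto simp: normal_words_def)

lemma Cons_in_normal_words:
  "x # w \<in> normal_words R \<longleftrightarrow> (\<forall>r\<in>R. \<not> prefix r (x # w)) \<and> w \<in> normal_words R"
  by (auto simp: normal_words_def sublist_Cons_right)

lemma fmul_nonzero_split:
  assumes "fmul f g w \<noteq> 0"
  obtains u v where "w = u @ v" "f u \<noteq> 0" "g v \<noteq> 0"
proof -
  obtain i where "f (take i w) * g (drop i w) \<noteq> 0"
    using assms unfolding fmul_def by (rule sum.not_neutral_contains_not_neutral)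
  then show thesis
    using that[of "take i w" "drop i w"] by simp
qed

lemma fmul_monom_w: "fmul (monom_w u) (monom_w v) = (monom_w (u @ v) :: word \<Rightarrow> 'k::field)"
proof
  fix w
  have "fmul (monom_w u) (monom_w v) w =
      (\<Sum>i\<le>length w. if i = length u \<and> w = u @ v then (1::'k) else 0)"
    unfolding fmul_def monom_w_def
    by (intro sum.cong refl) (auto simp: append_eq_conv_conj)
  also have "\<dots> = monom_w (u @ v) w"
    by (auto simp: monom_w_def)
  finally show "fmul (monom_w u) (monom_w v) w = (monom_w (u @ v) w :: 'k)" .
qed

lemma fmul_fscale_left: "fmul (fscale c f) g = fscale c (fmul f g)"
  by (auto simp: fmul_def fscale_def sum_distrib_left mult.assoc)

lemma monom_w_in_freealg: "monom_w u \<in> freealg"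
  by (auto simp: freealg_def monom_w_def)

lemma fscale_in_freealg: "f \<in> freealg \<Longrightarrow> fscale c f \<in> freealg"
  by (auto simp: freealg_def fscale_def elim: finite_subset[rotated])

lemma ideal_gen_sum:
  "finite A \<Longrightarrow> (\<And>a. a \<in> A \<Longrightarrow> g a \<in> ideal_gen R) \<Longrightarrow> sum g A \<in> ideal_gen R"
proof (induction A rule: finite_induct)
  case empty
  then show ?case using ideal_gen.zero by (simp add: zero_fun_def)
next
  case (insert a A)
  then have "(\<lambda>w. g a w + sum g A w) \<in> ideal_gen R"
    by (intro ideal_gen.add) auto
  then show ?case using insert by (simp add: plus_fun_def)
qed

lemma monomial_ideal_support:
  assumes "x \<in> ideal_gen (monom_w ` R :: (word \<Rightarrow> 'k::field) set)" "x w \<noteq> 0"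
  shows "w \<notin> normal_words R"
  using assms
proof (induction arbitrary: w)
  case zero
  then show ?case by simp
next
  case (add x y)
  then show ?case by (metis add.left_neutral)
next
  case (gen a b r)
  then obtain u v where w: "w = u @ v" and "fmul a r u \<noteq> 0"
    by (auto elim: fmul_nonzero_split)
  then obtain u1 u2 where "u = u1 @ u2" and "r u2 \<noteq> 0"
    by (auto elim: fmul_nonzero_split)
  moreover obtain \<rho> where "\<rho> \<in> R" "r = monom_w \<rho>"
    using gen.hyps by auto
  ultimately have "sublist \<rho> w" "\<rho> \<in> R"
    using w by (auto simp: monom_w_def split: if_splits)
  then show ?case by (auto simp: normal_words_def)
qed

lemma fscale_monom_w_in_monomial_ideal:
  assumes "w \<notin> normal_words R"
  shows "fscale c (monom_w w) \<in> ideal_gen (monom_w ` R :: (word \<Rightarrow> 'k::field) set)"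
proof -
  obtain u r v where "r \<in> R" "w = u @ r @ v"
    using assms by (auto simp: normal_words_def sublist_def)
  moreover have "fmul (fmul (fscale c (monom_w u)) (monom_w r)) (monom_w v)
      \<in> ideal_gen (monom_w ` R :: (word \<Rightarrow> 'k) set)"
    using \<open>r \<in> R\<close> by (intro ideal_gen.gen fscale_in_freealg monom_w_in_freealg) auto
  ultimately show ?thesis
    by (simp add: fmul_fscale_left fmul_monom_w)
qed

lemma homog_eq_supported_on: "homog n = supported_on {w. length w = n}"
  using finite_words_of_length[of n]
  by (auto simp: homog_def freealg_def supported_on_def elim: finite_subset[rotated])

lemma homog_inter_monomial_ideal:
  "homog n \<inter> ideal_gen (monom_w ` R) =
    (supported_on ({w. length w = n} - normal_words R) :: (word \<Rightarrow> 'k::field) set)"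
proof (intro equalityI subsetI)
  fix f :: "word \<Rightarrow> 'k"
  assume "f \<in> homog n \<inter> ideal_gen (monom_w ` R)"
  then show "f \<in> supported_on ({w. length w = n} - normal_words R)"
    using monomial_ideal_support by (fastforce simp: homog_eq_supported_on supported_on_def)
next
  fix f :: "word \<Rightarrow> 'k"
  let ?S = "{w. length w = n} - normal_words R"
  assume f: "f \<in> supported_on ?S"
  have "finite ?S"
    using finite_words_of_length by blast
  then have "f = (\<Sum>w\<in>?S. fscale (f w) (monom_w w))"
    using f by (rule supported_on_sum_monom_w)
  also have "\<dots> \<in> ideal_gen (monom_w ` R)"
    using \<open>finite ?S\<close> by (intro ideal_gen_sum fscale_monom_w_in_monomial_ideal) auto
  finally show "f \<in> homog n \<inter> ideal_gen (monom_w ` R)"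
    using f by (auto simp: homog_eq_supported_on supported_on_def)
qed

lemma quot_dim_monomial:
  "quot_dim TYPE('k::field) (monom_w ` R) n = card {w \<in> normal_words R. length w = n}"
proof -
  have "quot_dim TYPE('k) (monom_w ` R) n =
      card {w :: word. length w = n} - card ({w. length w = n} - normal_words R)"
    unfolding quot_dim_def homog_inter_monomial_ideal unfolding homog_eq_supported_on
    by (simp add: dim_supported_on finite_words_of_length)
  also have "\<dots> = card ({w. length w = n} \<inter> normal_words R)"
    using card_Int_Diff[OF finite_words_of_length, of n "normal_words R"] by simp
  finally show ?thesis
    by (simp add: Int_def conj_commute)
qed

definition count_fps :: "'a::finite list set \<Rightarrow> 'b::comm_ring_1 fps" where
  "count_fps L = Abs_fps (\<lambda>n. of_nat (card {w \<in> L. length w = n}))"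

inductive_set prefix_star :: "'a list \<Rightarrow> 'a list set \<Rightarrow> 'a list set" for p L where
  base: "w \<in> L \<Longrightarrow> w \<in> prefix_star p L"
| step: "w \<in> prefix_star p L \<Longrightarrow> p @ w \<in> prefix_star p L"

lemma prefix_star_unfold: "prefix_star p L = L \<union> (\<lambda>w. p @ w) ` prefix_star p L"
  by (auto elim: prefix_star.cases intro: prefix_star.intros)

lemma prefix_star_unique:
  assumes "p \<noteq> []" and S: "\<And>w. w \<in> S \<longleftrightarrow> w \<in> L \<or> (\<exists>v. w = p @ v \<and> v \<in> S)"
  shows "S = prefix_star p L"
proof (intro equalityI subsetI)
  fix w assume "w \<in> S"
  then show "w \<in> prefix_star p L"
  proof (induction w rule: length_induct)
    case (1 w)
    then consider "w \<in> L" | v where "w = p @ v" "v \<in> S"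
      using S by blast
    then show ?case
    proof cases
      case 2
      then have "length v < length w" using \<open>p \<noteq> []\<close> by simp
      then show ?thesis using 1 2 by (auto intro: prefix_star.step)
    qed (rule prefix_star.base)
  qed
next
  fix w assume "w \<in> prefix_star p L"
  then show "w \<in> S"
    by induction (use S in blast)+
qed

lemma count_fps_Nil: "count_fps {[]} = 1"
proof -
  have Nil_length: "{w. w = [] \<and> length w = n} = (if n = 0 then {[]} else {})" for n
    by auto
  show ?thesis
    by (intro fps_ext) (simp add: count_fps_def Nil_length)
qed

lemma fps_mult_one_minus_X_power_nth:
  "fps_nth (f * (1 - fps_X ^ m)) n = fps_nth f n - (if n < m then 0 else fps_nth f (n - m))"
  for f :: "'a::comm_ring_1 fps"
  by (simp add: right_diff_distrib fps_X_power_mult_right_nth)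

lemma card_prefix_star_length:
  fixes L :: "'a::finite list set"
  assumes "\<forall>w\<in>L. \<not> prefix p w"
  shows "card {w \<in> prefix_star p L. length w = n} =
    card {w \<in> L. length w = n} + card {w \<in> prefix_star p L. length w + length p = n}"
proof -
  let ?A = "{w \<in> L. length w = n}" and ?B = "{w \<in> prefix_star p L. length w + length p = n}"
  have "{w \<in> prefix_star p L. length w = n} = ?A \<union> (\<lambda>w. p @ w) ` ?B"
    by (subst prefix_star_unfold) auto
  moreover have "?A \<inter> (\<lambda>w. p @ w) ` ?B = {}"
    using assms by auto
  moreover have "finite ?A"
    by (rule finite_subset[OF _ finite_words_of_length[of n]]) auto
  moreover have "finite ?B"
    by (rule finite_subset[OF _ finite_words_of_length[of "n - length p"]]) auto
  moreover have "inj (\<lambda>w. p @ w)"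
    by (rule injI) simp
  ultimately show ?thesis
    by (simp add: card_Un_disjoint card_image inj_on_subset)
qed

lemma count_fps_prefix_star:
  assumes "p \<noteq> []" "\<forall>w\<in>L. \<not> prefix p w"
  shows "count_fps (prefix_star p L) * (1 - fps_X ^ length p) = count_fps L"
proof (rule fps_ext)
  fix n
  have "{w \<in> prefix_star p L. length w + length p = n} =
      (if n < length p then {} else {w \<in> prefix_star p L. length w = n - length p})"
    by auto
  then show "fps_nth (count_fps (prefix_star p L) * (1 - fps_X ^ length p)) n =
      fps_nth (count_fps L) n"
    using card_prefix_star_length[OF assms(2), of n]
    by (simp add: fps_mult_one_minus_X_power_nth count_fps_def)
qed

definition O_words :: "word set" where
  "O_words = {[True, True, False], [True, False, False, False], [True, False, True, False, False]}"

lemma O_rels_eq: "O_rels = monom_w ` O_words"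
  by (simp add: O_rels_def O_words_def)

definition O_normal_no_prefix :: "word set \<Rightarrow> word set" where
  "O_normal_no_prefix P = {w \<in> normal_words O_words. \<forall>p\<in>P. \<not> prefix p w}"

lemma O_normal_no_prefix_not_prefix:
  "w \<in> O_normal_no_prefix P \<Longrightarrow> p \<in> P \<Longrightarrow> \<not> prefix p w"
  by (simp add: O_normal_no_prefix_def)

lemma O_normal_eq_prefix_star_z1:
  "normal_words O_words = prefix_star [False] (O_normal_no_prefix {[False]})"
proof (rule prefix_star_unique)
  fix w
  show "w \<in> normal_words O_words \<longleftrightarrow>
      w \<in> O_normal_no_prefix {[False]} \<or> (\<exists>v. w = [False] @ v \<and> v \<in> normal_words O_words)"
    by (cases w) (auto simp: O_normal_no_prefix_def Cons_in_normal_words O_words_def)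
qed simp

lemma O_normal_eq_prefix_star_z2z1z1:
  "O_normal_no_prefix {[False]} =
    prefix_star [True, False, False] (O_normal_no_prefix {[False], [True, False, False]})"
proof (rule prefix_star_unique)
  fix w
  show "w \<in> O_normal_no_prefix {[False]} \<longleftrightarrow>
      w \<in> O_normal_no_prefix {[False], [True, False, False]} \<or>
      (\<exists>v. w = [True, False, False] @ v \<and> v \<in> O_normal_no_prefix {[False]})"
    by (auto simp: O_normal_no_prefix_def Cons_in_normal_words O_words_def prefix_def)
qed simp

lemma O_normal_eq_prefix_star_z2z1:
  "O_normal_no_prefix {[False], [True, False, False]} =
    prefix_star [True, False] (O_normal_no_prefix {[False], [True, False, False], [True, False]})"
proof (rule prefix_star_unique)
  fix w
  show "w \<in> O_normal_no_prefix {[False], [True, False, False]} \<longleftrightarrow>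
      w \<in> O_normal_no_prefix {[False], [True, False, False], [True, False]} \<or>
      (\<exists>v. w = [True, False] @ v \<and> v \<in> O_normal_no_prefix {[False], [True, False, False]})"
    by (auto simp: O_normal_no_prefix_def Cons_in_normal_words O_words_def prefix_def)
qed simp

lemma O_normal_eq_prefix_star_z2:
  "O_normal_no_prefix {[False], [True, False, False], [True, False]} = prefix_star [True] {[]}"
proof (rule prefix_star_unique)
  fix w
  show "w \<in> O_normal_no_prefix {[False], [True, False, False], [True, False]} \<longleftrightarrow>
      w \<in> {[]} \<or>
      (\<exists>v. w = [True] @ v \<and>
        v \<in> O_normal_no_prefix {[False], [True, False, False], [True, False]})"
    by (cases w)
      (auto simp: O_normal_no_prefix_def Cons_in_normal_words Nil_in_normal_words O_words_def
        prefix_def)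
qed simp

lemma count_fps_O_normal:
  "count_fps (normal_words O_words) * ((1 - fps_X)^2 * (1 - fps_X^2) * (1 - fps_X^3)) =
    (1 :: 'b::comm_ring_1 fps)"
proof -
  let ?N = "O_normal_no_prefix"
  have z1: "count_fps (normal_words O_words) * (1 - fps_X) =
      (count_fps (?N {[False]}) :: 'b fps)"
    using count_fps_prefix_star[of "[False]" "?N {[False]}"]
    by (simp add: O_normal_eq_prefix_star_z1 O_normal_no_prefix_not_prefix)
  have z2z1z1: "count_fps (?N {[False]}) * (1 - fps_X^3) =
      (count_fps (?N {[False], [True, False, False]}) :: 'b fps)"
    using count_fps_prefix_star[of "[True, False, False]" "?N {[False], [True, False, False]}"]
    by (simp add: O_normal_eq_prefix_star_z2z1z1 O_normal_no_prefix_not_prefix numeral_3_eq_3)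
  have z2z1: "count_fps (?N {[False], [True, False, False]}) * (1 - fps_X^2) =
      (count_fps (?N {[False], [True, False, False], [True, False]}) :: 'b fps)"
    using count_fps_prefix_star
        [of "[True, False]" "?N {[False], [True, False, False], [True, False]}"]
    by (simp add: O_normal_eq_prefix_star_z2z1 O_normal_no_prefix_not_prefix numeral_2_eq_2)
  have z2: "count_fps (?N {[False], [True, False, False], [True, False]}) * (1 - fps_X) =
      (1 :: 'b fps)"
    using count_fps_prefix_star[of "[True]" "{[]}"]
    by (simp add: O_normal_eq_prefix_star_z2 count_fps_Nil)
  have "count_fps (normal_words O_words) * ((1 - fps_X)^2 * (1 - fps_X^2) * (1 - fps_X^3)) =
      (((count_fps (normal_words O_words) * (1 - fps_X)) * (1 - fps_X^3)) * (1 - fps_X^2))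
        * (1 - fps_X :: 'b fps)"
    by (simp add: power2_eq_square mult_ac)
  also have "\<dots> = 1"
    by (simp only: z1 z2z1z1 z2z1 z2)
  finally show ?thesis .
qed

theorem lemma7p3:
  shows "hilbert_series TYPE('k::field) (O_rels :: (word \<Rightarrow> 'k) set) =
    inverse ((1 - fps_X)^2 * (1 - fps_X^2) * (1 - fps_X^3))"
proof -
  have "hilbert_series TYPE('k) (O_rels :: (word \<Rightarrow> 'k) set) = count_fps (normal_words O_words)"
    by (simp add: hilbert_series_def count_fps_def O_rels_eq quot_dim_monomial)
  also have "\<dots> = inverse ((1 - fps_X)^2 * (1 - fps_X^2) * (1 - fps_X^3))"
    by (rule fps_inverse_unique[symmetric]) (subst mult.commute, rule count_fps_O_normal)
  finally show ?thesis .
qed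

end
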